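(* For every Dirichlet character $\chi$ modulo $d\ge1$ one has $|A_\chi|\le1$, with equality if and only if $\chi$ is the principal character modulo $d$ (in which case $A_\chi=1$).
   Context: For a Dirichlet character $\chi$, $A_\chi=\prod_{p:\ \chi(p)\neq0}\Bigl(1+\frac{(\chi(p)-1)p}{(p^2-\chi(p))(p-1)}\Bigr)$, the product running over primes $p$ (it converges absolutely). *)

theory Defs
  imports "HOL-Analysis.Analysis" "HOL-Computational_Algebra.Primes"
begin

definition dirichlet_character :: "nat \<Rightarrow> (nat \<Rightarrow> complex) \<Rightarrow> bool" where
  "dirichlet_character d chi \<longleftrightarrow>
     d \<ge> 1 \<and>
     (\<forall>m n. chi (m * n) = chi m * chi n) \<and>
     (\<forall>n. chi (n + d) = chi n) \<and>
     (\<forall>n. chi n \<noteq> 0 \<longleftrightarrow> coprime n d)"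

definition principal_character :: "nat \<Rightarrow> nat \<Rightarrow> complex" where
  "principal_character d n = (if coprime n d then 1 else 0)"

definition A_factor :: "(nat \<Rightarrow> complex) \<Rightarrow> nat \<Rightarrow> complex" where
  "A_factor chi p =
     (if prime p \<and> chi p \<noteq> 0 then
        1 + ((chi p - 1) * of_nat p) / ((of_nat p ^ 2 - chi p) * (of_nat p - 1))
      else 1)"

definition A_const :: "(nat \<Rightarrow> complex) \<Rightarrow> complex" where
  "A_const chi = (\<Prod>p. A_factor chi p)"

end

theory Submission
  imports Defs "HOL-Number_Theory.Number_Theory"
begin

text \<open>For \<open>|c| = 1\<close> and \<open>x \<ge> 2\<close> write the Euler factor as \<open>N / D\<close> with
  \<open>D = (x\<^sup>2 - c)(x - 1)\<close> and \<open>N = D + (c - 1)x\<close>. A direct computation gives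
  \<open>|D|\<^sup>2 - |N|\<^sup>2 = 2x(x\<^sup>3 - x\<^sup>2 - 1)(1 - Re c)\<close>, so every factor has modulus at most 1,
  with equality only for \<open>c = 1\<close>. Since the factors differ from 1 by \<open>O(1/p\<^sup>2)\<close>, the
  product converges, and its modulus is bounded by the modulus of any single factor.
  A character that is 1 at every prime not dividing \<open>d\<close> is principal, so a
  non-principal character has a factor of modulus \<open>< 1\<close>.\<close>

definition A_local_denom :: "complex \<Rightarrow> real \<Rightarrow> complex" where
  "A_local_denom c x = (of_real x ^ 2 - c) * (of_real x - 1)"

definition A_local_factor :: "complex \<Rightarrow> real \<Rightarrow> complex" where
  "A_local_factor c x = 1 + ((c - 1) * of_real x) / A_local_denom c x"

lemma A_local_denom_bound_pos:
  fixes x :: real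
  assumes "x \<ge> 2"
  shows "(x ^ 2 - 1) * (x - 1) > 0"
proof -
  have "x ^ 2 \<ge> 2 ^ 2"
    using assms by (intro power_mono) auto
  then show ?thesis
    using assms by simp
qed

lemma norm_A_local_denom_ge:
  fixes c :: complex and x :: real
  assumes "x \<ge> 2" and "norm c \<le> 1"
  shows "norm (A_local_denom c x) \<ge> (x ^ 2 - 1) * (x - 1)"
proof -
  have "x ^ 2 - 1 \<le> norm (of_real x ^ 2 - c)"
    using norm_triangle_ineq2[of "of_real x ^ 2" c] assms by (simp add: norm_power)
  moreover have "norm (of_real x - 1 :: complex) = x - 1"
    using norm_of_real[of "x - 1"] assms(1) by simp
  moreover have "x ^ 2 - 1 \<ge> 0"
    using assms(1) by (simp add: one_le_power)
  ultimately show ?thesis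
    using assms(1) by (simp add: A_local_denom_def norm_mult mult_right_mono)
qed

lemma A_local_denom_nonzero:
  assumes "x \<ge> 2" and "norm c \<le> 1"
  shows "A_local_denom c x \<noteq> 0"
  using norm_A_local_denom_ge[OF assms] A_local_denom_bound_pos[OF assms(1)] by auto

lemma norm_A_local_factor:
  assumes "x \<ge> 2" and "norm c \<le> 1"
  shows "norm (A_local_factor c x)
    = norm (A_local_denom c x + (c - 1) * of_real x) / norm (A_local_denom c x)"
proof -
  have "A_local_factor c x = (A_local_denom c x + (c - 1) * of_real x) / A_local_denom c x"
    using A_local_denom_nonzero[OF assms] by (simp add: A_local_factor_def field_simps)
  then show ?thesis
    by (simp add: norm_divide)
qed

lemma norm_sq_A_local_denom_minus_numerator:
  fixes c :: complex and x :: real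
  shows "norm (A_local_denom c x) ^ 2 - norm (A_local_denom c x + (c - 1) * of_real x) ^ 2
       = 2 * x * (x ^ 3 - x ^ 2 - 1) * (1 - Re c) + (x ^ 2 - 2 * x) * (norm c ^ 2 - 1)"
  unfolding A_local_denom_def cmod_power2
  by (simp add: power2_eq_square power3_eq_cube algebra_simps)

lemma Re_less_1_if_norm_eq_1:
  fixes c :: complex
  assumes "norm c = 1" and "c \<noteq> 1"
  shows "Re c < 1"
proof -
  have "Re c \<noteq> 1"
  proof
    assume "Re c = 1"
    then have "Im c = 0"
      using assms(1) cmod_power2[of c] by simp
    with \<open>Re c = 1\<close> show False
      using assms(2) by (simp add: complex_eq_iff)
  qed
  then show ?thesis
    using complex_Re_le_cmod[of c] assms(1) by simp
qed

lemma norm_A_local_factor_le: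
  fixes c :: complex and x :: real
  assumes "x \<ge> 2" and "norm c = 1"
  shows "norm (A_local_factor c x) \<le> 1"
    and "c \<noteq> 1 \<Longrightarrow> norm (A_local_factor c x) < 1"
proof -
  define D where "D = A_local_denom c x"
  define N where "N = D + (c - 1) * of_real x"
  have "x ^ 3 - x ^ 2 - 1 = x ^ 2 * (x - 1) - 1"
    by (simp add: power2_eq_square power3_eq_cube algebra_simps)
  moreover have "x ^ 2 * (x - 1) \<ge> 2 ^ 2 * 1"
    using assms(1) by (intro mult_mono power_mono) auto
  ultimately have "x ^ 3 - x ^ 2 - 1 > 0"
    by simp
  then have gap_factor_pos: "2 * x * (x ^ 3 - x ^ 2 - 1) > 0"
    using assms(1) by simp
  have gap: "norm D ^ 2 - norm N ^ 2 = 2 * x * (x ^ 3 - x ^ 2 - 1) * (1 - Re c)"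
    using norm_sq_A_local_denom_minus_numerator[of c x] assms(2) unfolding D_def N_def by simp
  have D_pos: "norm D > 0"
    using A_local_denom_nonzero assms unfolding D_def by simp
  have f: "norm (A_local_factor c x) = norm N / norm D"
    using norm_A_local_factor assms unfolding D_def N_def by simp
  have "Re c \<le> 1"
    using complex_Re_le_cmod[of c] assms(2) by simp
  then have "norm N ^ 2 \<le> norm D ^ 2"
    using gap mult_nonneg_nonneg[of "2 * x * (x ^ 3 - x ^ 2 - 1)" "1 - Re c"] gap_factor_pos
    by linarith
  then have "norm N \<le> norm D"
    using power2_le_imp_le norm_ge_zero by blast
  then show "norm (A_local_factor c x) \<le> 1"
    unfolding f using D_pos by simp
  assume "c \<noteq> 1"
  then have "Re c < 1"
    using Re_less_1_if_norm_eq_1 assms(2) by blast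
  then have "norm N ^ 2 < norm D ^ 2"
    using gap mult_pos_pos[of "2 * x * (x ^ 3 - x ^ 2 - 1)" "1 - Re c"] gap_factor_pos
    by linarith
  then have "norm N < norm D"
    using power2_less_imp_less norm_ge_zero by blast
  then show "norm (A_local_factor c x) < 1"
    unfolding f using D_pos by simp
qed

lemma norm_A_local_factor_minus_1_le:
  fixes c :: complex and x :: real
  assumes "x \<ge> 2" and "norm c \<le> 1"
  shows "norm (A_local_factor c x - 1) \<le> 8 / x ^ 2"
proof -
  have x_pos: "x > 0"
    using assms(1) by simp
  have "norm (A_local_factor c x - 1) = norm (c - 1) * x / norm (A_local_denom c x)"
    unfolding A_local_factor_def using x_pos by (simp add: norm_divide norm_mult)
  also have "\<dots> \<le> 2 * x / ((x ^ 2 - 1) * (x - 1))"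
  proof (rule frac_le)
    show "norm (c - 1) * x \<le> 2 * x"
      using norm_triangle_ineq4[of c 1] assms(2) x_pos by simp
  qed (use norm_A_local_denom_ge[OF assms] A_local_denom_bound_pos[OF assms(1)] x_pos in auto)
  also have "\<dots> \<le> 8 / x ^ 2"
  proof -
    have "8 * ((x ^ 2 - 1) * (x - 1)) - 2 * x * x ^ 2 = 2 * x * ((3 * x + 2) * (x - 2)) + 8"
      by (simp add: algebra_simps power2_eq_square power3_eq_cube)
    moreover have "2 * x * ((3 * x + 2) * (x - 2)) \<ge> 0"
      using assms(1) by simp
    ultimately have "2 * x * x ^ 2 \<le> 8 * ((x ^ 2 - 1) * (x - 1))"
      by linarith
    then show ?thesis
      using A_local_denom_bound_pos[OF assms(1)] x_pos by (simp add: divide_simps)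
  qed
  finally show ?thesis .
qed

lemma dirichlet_character_mult:
  "dirichlet_character d chi \<Longrightarrow> chi (m * n) = chi m * chi n"
  by (simp add: dirichlet_character_def)

lemma dirichlet_character_nonzero_iff:
  "dirichlet_character d chi \<Longrightarrow> chi n \<noteq> 0 \<longleftrightarrow> coprime n d"
  by (simp add: dirichlet_character_def)

lemma dirichlet_character_one:
  assumes "dirichlet_character d chi"
  shows "chi 1 = 1"
proof -
  have "chi 1 * chi 1 = chi 1 * 1"
    using dirichlet_character_mult[OF assms, of 1 1] by simp
  moreover have "chi 1 \<noteq> 0"
    using dirichlet_character_nonzero_iff[OF assms, of 1] by simp
  ultimately show ?thesis
    by simp
qed

lemma dirichlet_character_mod:
  assumes "dirichlet_character d chi"
  shows "chi (n mod d) = chi n"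
proof -
  have periodic: "chi (m + d) = chi m" for m
    using assms by (simp add: dirichlet_character_def)
  have "chi (m + k * d) = chi m" for m k
  proof (induction k)
    case (Suc k)
    have "chi (m + Suc k * d) = chi (m + k * d + d)"
      by (simp add: algebra_simps)
    then show ?case
      using periodic Suc.IH by simp
  qed simp
  from this[of "n mod d" "n div d"] show ?thesis
    by simp
qed

lemma dirichlet_character_cong:
  assumes "dirichlet_character d chi" and "[m = n] (mod d)"
  shows "chi m = chi n"
  using assms dirichlet_character_mod unfolding cong_def by metis

lemma dirichlet_character_power:
  assumes "dirichlet_character d chi"
  shows "chi (n ^ k) = chi n ^ k"
proof (induction k)
  case 0
  show ?case
    using dirichlet_character_one[OF assms] by (metis power_0)
next
  case (Suc k)
  then show ?case
    by (simp add: dirichlet_character_mult[OF assms])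
qed

lemma norm_dirichlet_character:
  assumes "dirichlet_character d chi" and "coprime n d"
  shows "norm (chi n) = 1"
proof -
  have t_pos: "totient d > 0"
    using assms(1) by (simp add: dirichlet_character_def)
  have "chi n ^ totient d = chi 1"
    using dirichlet_character_cong[OF assms(1) euler_theorem[OF assms(2)]]
      dirichlet_character_power[OF assms(1)] by simp
  then have "norm (chi n) ^ totient d = 1 ^ totient d"
    using dirichlet_character_one[OF assms(1)] by (metis norm_one norm_power power_one)
  then show ?thesis
    using power_eq_iff_eq_base[OF t_pos, of "norm (chi n)" 1] by simp
qed

lemma norm_dirichlet_character_nonzero:
  assumes "dirichlet_character d chi" and "chi n \<noteq> 0"
  shows "norm (chi n) = 1"
  using assms norm_dirichlet_character dirichlet_character_nonzero_iff by blast

lemma dirichlet_character_eq_principal: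
  assumes chi: "dirichlet_character d chi"
    and primes: "\<And>p. prime p \<Longrightarrow> chi p \<noteq> 0 \<Longrightarrow> chi p = 1"
  shows "chi = principal_character d"
proof
  fix n
  note nonzero_iff = dirichlet_character_nonzero_iff[OF chi]
  have "coprime n d \<longrightarrow> chi n = 1"
  proof (induction n rule: prime_divisors_induct)
    case zero
    show ?case
      using dirichlet_character_cong[OF chi, of 0 1] dirichlet_character_one[OF chi] by auto
  next
    case (unit n)
    then show ?case
      using dirichlet_character_one[OF chi] by simp
  next
    case (factor p n)
    show ?case
    proof
      assume "coprime (p * n) d"
      then have "chi p = 1" and "chi n = 1"
        using primes[OF factor.hyps] nonzero_iff[of p] factor.IH by auto
      then show "chi (p * n) = 1"
        by (simp add: dirichlet_character_mult[OF chi])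
    qed
  qed
  then show "chi n = principal_character d n"
    using nonzero_iff[of n] by (auto simp: principal_character_def)
qed

lemma A_factor_eq_A_local_factor:
  assumes "prime p" and "chi p \<noteq> 0"
  shows "A_factor chi p = A_local_factor (chi p) (real p)"
  using assms by (simp add: A_factor_def A_local_factor_def A_local_denom_def)

lemma A_factor_eq_1:
  assumes "\<not> (prime p \<and> chi p \<noteq> 0)"
  shows "A_factor chi p = 1"
  unfolding A_factor_def by (rule if_not_P[OF assms])

lemma norm_A_factor_le_1:
  assumes "dirichlet_character d chi"
  shows "norm (A_factor chi p) \<le> 1"
proof (cases "prime p \<and> chi p \<noteq> 0")
  case True
  then have "real p \<ge> 2" and "norm (chi p) = 1"
    using prime_ge_2_nat norm_dirichlet_character_nonzero[OF assms] by auto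
  then show ?thesis
    using True norm_A_local_factor_le(1) by (simp add: A_factor_eq_A_local_factor)
qed (simp add: A_factor_eq_1)

lemma norm_A_factor_less_1:
  assumes "dirichlet_character d chi" and "prime p" and "chi p \<noteq> 0" and "chi p \<noteq> 1"
  shows "norm (A_factor chi p) < 1"
proof -
  have "real p \<ge> 2" and "norm (chi p) = 1"
    using prime_ge_2_nat[OF assms(2)] norm_dirichlet_character_nonzero[OF assms(1,3)] by auto
  then show ?thesis
    using assms norm_A_local_factor_le(2) by (simp add: A_factor_eq_A_local_factor)
qed

lemma norm_A_factor_minus_1_le:
  assumes "dirichlet_character d chi"
  shows "norm (A_factor chi p - 1) \<le> 8 / real p ^ 2"
proof (cases "prime p \<and> chi p \<noteq> 0")
  case True
  then have "real p \<ge> 2" and "norm (chi p) \<le> 1"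
    using prime_ge_2_nat norm_dirichlet_character_nonzero[OF assms] by auto
  then show ?thesis
    using True norm_A_local_factor_minus_1_le by (simp add: A_factor_eq_A_local_factor)
qed (simp add: A_factor_eq_1)

lemma convergent_prod_A_factor:
  assumes "dirichlet_character d chi"
  shows "convergent_prod (A_factor chi)"
proof -
  have "summable (\<lambda>p. 8 * inverse (real p ^ 2))"
    by (intro summable_mult inverse_power_summable) simp
  then have "summable (\<lambda>p. norm (A_factor chi p - 1))"
    by (rule summable_comparison_test[rotated])
      (use norm_A_factor_minus_1_le[OF assms] in \<open>auto simp: field_simps\<close>)
  then show ?thesis
    by (intro abs_convergent_prod_imp_convergent_prod summable_imp_abs_convergent_prod)
qed

lemma A_factor_principal_character: "A_factor (principal_character d) = (\<lambda>_. 1)"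
  by (auto simp: A_factor_def principal_character_def)

lemma norm_prodinf_le_norm_factor:
  fixes f :: "nat \<Rightarrow> 'a :: real_normed_field"
  assumes "convergent_prod f" and "\<And>n. norm (f n) \<le> 1"
  shows "norm (prodinf f) \<le> norm (f k)"
proof -
  have "(\<lambda>n. norm (f n)) has_prod norm (prodinf f)"
    using assms(1) by (intro has_prod_norm) auto
  moreover have "(\<lambda>n. if n \<in> {k} then norm (f n) else 1) has_prod norm (f k)"
    using has_prod_If_finite_set[of "{k}" "\<lambda>n. norm (f n)"] by simp
  ultimately show ?thesis
    by (rule has_prod_le) (use assms(2) in auto)
qed

theorem mainTheorem14:
  fixes d :: nat and chi :: "nat \<Rightarrow> complex"
  assumes "d \<ge> 1" and "dirichlet_character d chi"
  shows "norm (A_const chi) \<le> 1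
         \<and> (norm (A_const chi) = 1 \<longleftrightarrow> chi = principal_character d)
         \<and> (chi = principal_character d \<longrightarrow> A_const chi = 1)"
proof -
  note chi = assms(2)
  have le_factor: "norm (A_const chi) \<le> norm (A_factor chi p)" for p
    unfolding A_const_def
    using convergent_prod_A_factor[OF chi] norm_A_factor_le_1[OF chi]
    by (rule norm_prodinf_le_norm_factor)
  have le_1: "norm (A_const chi) \<le> 1"
    using le_factor[of 0] norm_A_factor_le_1[OF chi, of 0] by linarith
  have principal: "A_const chi = 1" if "chi = principal_character d"
    using that by (simp add: A_const_def A_factor_principal_character)
  have non_principal: "norm (A_const chi) < 1" if not_principal: "chi \<noteq> principal_character d"
  proof -
    obtain p where "prime p" "chi p \<noteq> 0" "chi p \<noteq> 1"
      using dirichlet_character_eq_principal[OF chi] not_principal by metis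
    then have "norm (A_factor chi p) < 1"
      by (rule norm_A_factor_less_1[OF chi])
    then show ?thesis
      using le_factor[of p] by linarith
  qed
  have "norm (A_const chi) = 1 \<longleftrightarrow> chi = principal_character d"
    using principal non_principal by (metis norm_one order_less_irrefl)
  then show ?thesis
    using le_1 principal by blast
qed

end
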